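(* Let $I$ be a countable set with $|I|\ge2$, let $\mathfrak{M}_i=(S_i,\mathcal{L}_i)$, $i\in I$, be partial linear spaces, $\mathfrak{M}=\bigotimes_{i\in I}\mathfrak{M}_i$ with point set $S=\prod_i S_i$, let $\mathcal{H}_i$ be a hyperplane of $\mathfrak{M}_i$ for each $i$, and let $\mathcal{H}=\bigcup_{i\in I}\{x\in S:x_i\in\mathcal{H}_i\}$. Then: (i) the point-line structure of $\mathfrak{M}\setminus\mathcal{H}$ (without parallelism) is isomorphic to the Segre product $\bigotimes_{i\in I}\mathfrak{N}_i$, where $\mathfrak{N}_i$ is the point-line structure of $\mathfrak{M}_i\setminus\mathcal{H}_i$; in fact $S\setminus\mathcal{H}=\prod_{i\in I}(S_i\setminus\mathcal{H}_i)$; (ii) $\mathfrak{M}\setminus\mathcal{H}=(S\setminus\mathcal{H},\text{lines},\parallel_\mathcal{H})$ is isomorphic to $\bigotimes_{i\in I}\mathfrak{N}_i$ equipped with the parallelism $\parallel^\ast$ defined by: for lines $L=a[i/l]$ and $K=b[j/k]$ of $\bigotimes_i\mathfrak{N}_i$ (with $l,k$ lines of $\mathfrak{M}_i\setminus\mathcal{H}_i$, resp. $\mathfrak{M}_j\setminus\mathcal{H}_j$), $L\parallel^\ast K$ iff for every coordinate $s\in I$ the $s$-th coordinate sets $L_s$, $K_s$ of $L$, $K$ are either equal or are lines with $L_s\parallel_{\mathcal{H}_s}K_s$ (equivalently: $i=j$, $a_s=b_s$ for all $s\neq i$, and $l=k$ or $l\parallel_{\mathcal{H}_i}k$).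
   Context: A partial linear space is a pair $(S,\mathcal{L})$ of points and lines such that every line has at least two points, every point lies on a line, two distinct lines share at most one point. A subspace is a set such that any line meeting it in at least two points lies in it; a hyperplane is a proper subspace meeting every line. Segre product: for $a\in\prod_i S_i$, $x\in S_i$, $a[i/x]$ is $a$ with $i$-th coordinate replaced by $x$, $a[i/A]=\{a[i/x]:x\in A\}$; lines are $a[i/l]$ with $l$ a line of the $i$-th factor; the $s$-th coordinate set of $a[i/l]$ is $l$ if $s=i$ and $\{a_s\}$ otherwise. For a hyperplane $\mathcal{H}$ of a partial linear space $(S,\mathcal{L})$, each line $L\not\subseteq\mathcal{H}$ meets $\mathcal{H}$ in a unique point $L^\infty$; the complement $\mathfrak{M}\setminus\mathcal{H}$ has points $S\setminus\mathcal{H}$, lines $L\setminus\mathcal{H}$ for $L\not\subseteq\mathcal{H}$, and parallelism $L\parallel_\mathcal{H}K$ iff $L^\infty=K^\infty$. *)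

theory Defs
  imports Main "HOL-Library.FuncSet" "HOL-Library.Countable_Set"
begin

definition partial_linear_space :: "'p set \<Rightarrow> 'p set set \<Rightarrow> bool" where
  "partial_linear_space S Ls \<longleftrightarrow>
     (\<forall>L\<in>Ls. L \<subseteq> S \<and> (\<exists>x y. x \<in> L \<and> y \<in> L \<and> x \<noteq> y)) \<and>
     (\<forall>p\<in>S. \<exists>L\<in>Ls. p \<in> L) \<and>
     (\<forall>L\<in>Ls. \<forall>K\<in>Ls. L \<noteq> K \<longrightarrow> (\<forall>x y. x \<in> L \<inter> K \<and> y \<in> L \<inter> K \<longrightarrow> x = y))"

definition subspace :: "'p set \<Rightarrow> 'p set set \<Rightarrow> 'p set \<Rightarrow> bool" where
  "subspace S Ls X \<longleftrightarrow> X \<subseteq> S \<and>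
     (\<forall>L\<in>Ls. (\<exists>x y. x \<noteq> y \<and> x \<in> L \<inter> X \<and> y \<in> L \<inter> X) \<longrightarrow> L \<subseteq> X)"

definition hyperplane :: "'p set \<Rightarrow> 'p set set \<Rightarrow> 'p set \<Rightarrow> bool" where
  "hyperplane S Ls H \<longleftrightarrow> subspace S Ls H \<and> H \<noteq> S \<and> (\<forall>L\<in>Ls. L \<inter> H \<noteq> {})"

definition inf_pt :: "'p set \<Rightarrow> 'p set \<Rightarrow> 'p" where
  "inf_pt H L = (THE p. p \<in> L \<inter> H)"

definition compl_lines :: "'p set set \<Rightarrow> 'p set \<Rightarrow> 'p set set" where
  "compl_lines Ls H = {L - H | L. L \<in> Ls \<and> \<not> L \<subseteq> H}"

definition compl_par :: "'p set set \<Rightarrow> 'p set \<Rightarrow> 'p set \<Rightarrow> 'p set \<Rightarrow> bool" where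
  "compl_par Ls H L' K' \<longleftrightarrow>
     (\<exists>L K. L \<in> Ls \<and> K \<in> Ls \<and> \<not> L \<subseteq> H \<and> \<not> K \<subseteq> H \<and>
            L' = L - H \<and> K' = K - H \<and> inf_pt H L = inf_pt H K)"

definition segre_points :: "'i set \<Rightarrow> ('i \<Rightarrow> 'p set) \<Rightarrow> ('i \<Rightarrow> 'p) set" where
  "segre_points I S = PiE I S"

definition segre_line :: "('i \<Rightarrow> 'p) \<Rightarrow> 'i \<Rightarrow> 'p set \<Rightarrow> ('i \<Rightarrow> 'p) set" where
  "segre_line a i l = (\<lambda>x. a(i := x)) ` l"

definition segre_lines :: "'i set \<Rightarrow> ('i \<Rightarrow> 'p set) \<Rightarrow> ('i \<Rightarrow> 'p set set) \<Rightarrow> ('i \<Rightarrow> 'p) set set" where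
  "segre_lines I S Ls = {segre_line a i l | a i l. a \<in> PiE I S \<and> i \<in> I \<and> l \<in> Ls i}"

definition coord_set :: "('i \<Rightarrow> 'p) \<Rightarrow> 'i \<Rightarrow> 'p set \<Rightarrow> 'i \<Rightarrow> 'p set" where
  "coord_set a i l s = (if s = i then l else {a s})"

definition segre_par ::
  "'i set \<Rightarrow> ('i \<Rightarrow> 'p set) \<Rightarrow> ('i \<Rightarrow> 'p set set) \<Rightarrow> ('i \<Rightarrow> 'p set \<Rightarrow> 'p set \<Rightarrow> bool)
    \<Rightarrow> ('i \<Rightarrow> 'p) set \<Rightarrow> ('i \<Rightarrow> 'p) set \<Rightarrow> bool" where
  "segre_par I S Ls par L K \<longleftrightarrow>
     (\<exists>a i l b j k. a \<in> PiE I S \<and> i \<in> I \<and> l \<in> Ls i \<and>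
                   b \<in> PiE I S \<and> j \<in> I \<and> k \<in> Ls j \<and>
                   L = segre_line a i l \<and> K = segre_line b j k \<and>
                   (\<forall>s\<in>I. coord_set a i l s = coord_set b j k s \<or> (s = i \<and> s = j \<and> par i l k)))"

definition segre_hyp :: "'i set \<Rightarrow> ('i \<Rightarrow> 'p set) \<Rightarrow> ('i \<Rightarrow> 'p set) \<Rightarrow> ('i \<Rightarrow> 'p) set" where
  "segre_hyp I S Hs = (\<Union>i\<in>I. {x \<in> PiE I S. x i \<in> Hs i})"

end

theory Submission
  imports Defs
begin

text \<open>A point of the product lies off \<open>H\<close> iff all of its coordinates lie off the \<open>H\<^sub>i\<close>. Hence a
  line \<open>a[i/l]\<close> not contained in \<open>H\<close> can be rewritten with a base point \<open>a\<close> off \<open>H\<close>; it then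
  meets \<open>H\<close> exactly in \<open>a[i/l\<^sup>\<infinity>]\<close>, and removing \<open>H\<close> leaves \<open>a[i/l \<setminus> H\<^sub>i]\<close>. Two such points
  \<open>a[i/p]\<close>, \<open>b[j/q]\<close> with \<open>p \<in> H\<^sub>i\<close>, \<open>q \<in> H\<^sub>j\<close> coincide only if \<open>i = j\<close>, \<open>p = q\<close> and \<open>a\<close>, \<open>b\<close> agree
  off \<open>i\<close>, which is exactly the coordinatewise parallelism.\<close>

lemma inf_pt_eqI: "L \<inter> H = {p} \<Longrightarrow> inf_pt H L = p"
  unfolding inf_pt_def by (rule the_equality) auto

lemma hyperplane_line_inter:
  assumes "hyperplane S Ls H" "l \<in> Ls" "\<not> l \<subseteq> H"
  shows "l \<inter> H = {inf_pt H l}"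
proof -
  obtain p where p: "p \<in> l \<inter> H"
    using assms unfolding hyperplane_def by blast
  have "q = p" if "q \<in> l \<inter> H" for q
    using assms p that unfolding hyperplane_def subspace_def by blast
  with p have "l \<inter> H = {p}" by blast
  then show ?thesis by (metis inf_pt_eqI)
qed

lemma partial_linear_space_line_subset:
  "partial_linear_space S Ls \<Longrightarrow> l \<in> Ls \<Longrightarrow> l \<subseteq> S"
  unfolding partial_linear_space_def by blast

lemma mem_segre_hyp_iff:
  "x \<in> segre_hyp I S Hs \<longleftrightarrow> x \<in> PiE I S \<and> (\<exists>i\<in>I. x i \<in> Hs i)"
  by (auto simp: segre_hyp_def)

lemma segre_points_diff_hyp:
  "segre_points I S - segre_hyp I S Hs = segre_points I (\<lambda>i. S i - Hs i)"
  by (auto simp: segre_points_def mem_segre_hyp_iff PiE_iff)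

lemma PiE_fun_upd_member: "a \<in> PiE I S \<Longrightarrow> i \<in> I \<Longrightarrow> x \<in> S i \<Longrightarrow> a(i := x) \<in> PiE I S"
  using PiE_fun_upd by (metis insert_absorb)

lemma segre_line_fun_upd: "segre_line (a(i := x)) i l = segre_line a i l"
  by (simp add: segre_line_def)

lemma segre_line_singleton: "segre_line a i {p} = {a(i := p)}"
  by (simp add: segre_line_def)

lemma fun_upd_mem_segre_hyp_iff:
  assumes "a \<in> PiE I (\<lambda>i. S i - Hs i)" "i \<in> I" "x \<in> S i"
  shows "a(i := x) \<in> segre_hyp I S Hs \<longleftrightarrow> x \<in> Hs i"
  using assms by (auto simp: mem_segre_hyp_iff PiE_iff extensional_def)

lemma segre_line_inter_hyp:
  assumes "a \<in> PiE I (\<lambda>i. S i - Hs i)" "i \<in> I" "l \<subseteq> S i"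
  shows "segre_line a i l \<inter> segre_hyp I S Hs = segre_line a i (l \<inter> Hs i)"
  using assms fun_upd_mem_segre_hyp_iff[OF assms(1,2)] by (auto simp: segre_line_def)

lemma segre_line_diff_hyp:
  assumes "a \<in> PiE I (\<lambda>i. S i - Hs i)" "i \<in> I" "l \<subseteq> S i"
  shows "segre_line a i l - segre_hyp I S Hs = segre_line a i (l - Hs i)"
  using assms fun_upd_mem_segre_hyp_iff[OF assms(1,2)] by (auto simp: segre_line_def)

lemma inf_pt_segre_line:
  assumes "a \<in> PiE I (\<lambda>i. S i - Hs i)" "i \<in> I" "l \<subseteq> S i"
    and "hyperplane (S i) (Ls i) (Hs i)" "l \<in> Ls i" "\<not> l \<subseteq> Hs i"
  shows "inf_pt (segre_hyp I S Hs) (segre_line a i l) = a(i := inf_pt (Hs i) l)"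
proof (rule inf_pt_eqI)
  show "segre_line a i l \<inter> segre_hyp I S Hs = {a(i := inf_pt (Hs i) l)}"
    using segre_line_inter_hyp[OF assms(1-3)] hyperplane_line_inter[OF assms(4-6)]
    by (simp add: segre_line_singleton)
qed

lemma segre_line_normal_form:
  assumes a: "a \<in> PiE I S" and i: "i \<in> I" and l: "l \<subseteq> S i"
    and off: "\<not> segre_line a i l \<subseteq> segre_hyp I S Hs"
  obtains a' where "a' \<in> PiE I (\<lambda>i. S i - Hs i)" "\<not> l \<subseteq> Hs i"
    "segre_line a' i l = segre_line a i l"
proof -
  obtain x where x: "x \<in> l" "a(i := x) \<notin> segre_hyp I S Hs"
    using off by (auto simp: segre_line_def)
  have "a(i := x) \<in> PiE I S"
    using a i l x(1) by (intro PiE_fun_upd_member) auto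
  with x(2) have a': "a(i := x) \<in> PiE I (\<lambda>i. S i - Hs i)"
    using segre_points_diff_hyp[of I S Hs] unfolding segre_points_def by blast
  then have "x \<notin> Hs i"
    using i PiE_mem[OF a'] by fastforce
  with x(1) have "\<not> l \<subseteq> Hs i"
    by blast
  moreover have "segre_line (a(i := x)) i l = segre_line a i l"
    by (rule segre_line_fun_upd)
  ultimately show thesis
    using a' that by blast
qed

lemma segre_line_off_hypE:
  assumes pls: "\<forall>i\<in>I. partial_linear_space (S i) (Ls i)"
    and L: "L \<in> segre_lines I S Ls" and off: "\<not> L \<subseteq> segre_hyp I S Hs"
  obtains a i l where "a \<in> PiE I (\<lambda>i. S i - Hs i)" "i \<in> I" "l \<in> Ls i" "\<not> l \<subseteq> Hs i"
    "L = segre_line a i l"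
proof -
  obtain a i l where a: "a \<in> PiE I S" and i: "i \<in> I" and l: "l \<in> Ls i"
    and L_eq: "L = segre_line a i l"
    using L unfolding segre_lines_def by blast
  obtain a' where "a' \<in> PiE I (\<lambda>i. S i - Hs i)" "\<not> l \<subseteq> Hs i"
    "segre_line a' i l = segre_line a i l"
  proof (rule segre_line_normal_form[OF a i])
    show "l \<subseteq> S i" using pls i l partial_linear_space_line_subset by blast
    show "\<not> segre_line a i l \<subseteq> segre_hyp I S Hs" using off L_eq by simp
  qed
  with i l L_eq that show thesis
    by simp
qed

lemma segre_line_mem_segre_lines:
  "a \<in> PiE I S \<Longrightarrow> i \<in> I \<Longrightarrow> l \<in> Ls i \<Longrightarrow> segre_line a i l \<in> segre_lines I S Ls"
  unfolding segre_lines_def by blast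

lemma segre_line_not_subset_hyp:
  assumes "a \<in> PiE I (\<lambda>i. S i - Hs i)" "i \<in> I" "l \<subseteq> S i" "\<not> l \<subseteq> Hs i"
  shows "\<not> segre_line a i l \<subseteq> segre_hyp I S Hs"
proof -
  have "segre_line a i (l - Hs i) \<noteq> {}"
    using assms(4) by (auto simp: segre_line_def)
  then show ?thesis
    using segre_line_diff_hyp[OF assms(1-3)] by blast
qed

lemma segre_line_off_hypI:
  assumes pls: "\<forall>i\<in>I. partial_linear_space (S i) (Ls i)"
    and a: "a \<in> PiE I (\<lambda>i. S i - Hs i)" and i: "i \<in> I" and l: "l \<in> Ls i" "\<not> l \<subseteq> Hs i"
  shows "segre_line a i l \<in> segre_lines I S Ls" "\<not> segre_line a i l \<subseteq> segre_hyp I S Hs"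
proof -
  have "a \<in> PiE I S"
    using a by (auto simp: PiE_iff)
  then show "segre_line a i l \<in> segre_lines I S Ls"
    using i l(1) by (rule segre_line_mem_segre_lines)
  show "\<not> segre_line a i l \<subseteq> segre_hyp I S Hs"
    using a i l pls partial_linear_space_line_subset by (intro segre_line_not_subset_hyp) blast+
qed

lemma compl_lines_segre:
  assumes pls: "\<forall>i\<in>I. partial_linear_space (S i) (Ls i)"
  shows "compl_lines (segre_lines I S Ls) (segre_hyp I S Hs)
           = segre_lines I (\<lambda>i. S i - Hs i) (\<lambda>i. compl_lines (Ls i) (Hs i))"
proof -
  have diff: "segre_line a i l - segre_hyp I S Hs = segre_line a i (l - Hs i)"
    if "a \<in> PiE I (\<lambda>i. S i - Hs i)" "i \<in> I" "l \<in> Ls i" for a i l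
    using pls that by (intro segre_line_diff_hyp partial_linear_space_line_subset) auto
  show ?thesis
  proof (intro equalityI subsetI)
    fix L' assume "L' \<in> compl_lines (segre_lines I S Ls) (segre_hyp I S Hs)"
    then obtain L where line: "L \<in> segre_lines I S Ls" and off: "\<not> L \<subseteq> segre_hyp I S Hs"
      and L': "L' = L - segre_hyp I S Hs"
      unfolding compl_lines_def by blast
    obtain a i l where a: "a \<in> PiE I (\<lambda>i. S i - Hs i)" and i: "i \<in> I"
      and l: "l \<in> Ls i" "\<not> l \<subseteq> Hs i" and L: "L = segre_line a i l"
      by (rule segre_line_off_hypE[OF pls line off])
    have "l - Hs i \<in> compl_lines (Ls i) (Hs i)"
      using l unfolding compl_lines_def by blast
    moreover have "L' = segre_line a i (l - Hs i)"
      using diff[OF a i l(1)] L L' by simp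
    ultimately show "L' \<in> segre_lines I (\<lambda>i. S i - Hs i) (\<lambda>i. compl_lines (Ls i) (Hs i))"
      using a i unfolding segre_lines_def by blast
  next
    fix L' assume "L' \<in> segre_lines I (\<lambda>i. S i - Hs i) (\<lambda>i. compl_lines (Ls i) (Hs i))"
    then obtain a i l where a: "a \<in> PiE I (\<lambda>i. S i - Hs i)" and i: "i \<in> I"
      and l: "l \<in> Ls i" "\<not> l \<subseteq> Hs i" and L': "L' = segre_line a i (l - Hs i)"
      unfolding segre_lines_def compl_lines_def by blast
    have "L' = segre_line a i l - segre_hyp I S Hs"
      using diff[OF a i l(1)] L' by simp
    with segre_line_off_hypI[OF pls a i l] show "L' \<in> compl_lines (segre_lines I S Ls) (segre_hyp I S Hs)"
      unfolding compl_lines_def by blast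
  qed
qed

lemma compl_par_segre_iff:
  assumes pls: "\<forall>i\<in>I. partial_linear_space (S i) (Ls i)"
    and hyp: "\<forall>i\<in>I. hyperplane (S i) (Ls i) (Hs i)"
  shows "compl_par (segre_lines I S Ls) (segre_hyp I S Hs) L K \<longleftrightarrow>
    (\<exists>a i l b j k. a \<in> PiE I (\<lambda>i. S i - Hs i) \<and> i \<in> I \<and> l \<in> Ls i \<and> \<not> l \<subseteq> Hs i
       \<and> b \<in> PiE I (\<lambda>i. S i - Hs i) \<and> j \<in> I \<and> k \<in> Ls j \<and> \<not> k \<subseteq> Hs j
       \<and> L = segre_line a i (l - Hs i) \<and> K = segre_line b j (k - Hs j)
       \<and> a(i := inf_pt (Hs i) l) = b(j := inf_pt (Hs j) k))"
  (is "?lhs \<longleftrightarrow> ?rhs")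
proof -
  have line: "segre_line a i l - segre_hyp I S Hs = segre_line a i (l - Hs i)
      \<and> inf_pt (segre_hyp I S Hs) (segre_line a i l) = a(i := inf_pt (Hs i) l)"
    if a: "a \<in> PiE I (\<lambda>i. S i - Hs i)" and i: "i \<in> I" and l: "l \<in> Ls i" "\<not> l \<subseteq> Hs i"
    for a i l
  proof -
    have lS: "l \<subseteq> S i" using pls i l partial_linear_space_line_subset by blast
    have hyp_i: "hyperplane (S i) (Ls i) (Hs i)" using hyp i by blast
    show ?thesis
      using segre_line_diff_hyp[where S = S and Hs = Hs, OF a i lS]
        inf_pt_segre_line[where S = S and Hs = Hs and Ls = Ls, OF a i lS hyp_i l] by blast
  qed
  show ?thesis
  proof
    assume ?lhs
    then obtain L0 K0 where L0: "L0 \<in> segre_lines I S Ls" "\<not> L0 \<subseteq> segre_hyp I S Hs"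
      and K0: "K0 \<in> segre_lines I S Ls" "\<not> K0 \<subseteq> segre_hyp I S Hs"
      and L: "L = L0 - segre_hyp I S Hs" and K: "K = K0 - segre_hyp I S Hs"
      and meet: "inf_pt (segre_hyp I S Hs) L0 = inf_pt (segre_hyp I S Hs) K0"
      unfolding compl_par_def by blast
    obtain a i l where a: "a \<in> PiE I (\<lambda>i. S i - Hs i)" "i \<in> I" "l \<in> Ls i" "\<not> l \<subseteq> Hs i"
      and L0_eq: "L0 = segre_line a i l"
      by (rule segre_line_off_hypE[OF pls L0])
    obtain b j k where b: "b \<in> PiE I (\<lambda>i. S i - Hs i)" "j \<in> I" "k \<in> Ls j" "\<not> k \<subseteq> Hs j"
      and K0_eq: "K0 = segre_line b j k"
      by (rule segre_line_off_hypE[OF pls K0])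
    have "L = segre_line a i (l - Hs i)" "K = segre_line b j (k - Hs j)"
      and "a(i := inf_pt (Hs i) l) = b(j := inf_pt (Hs j) k)"
      using line[OF a] line[OF b] L K meet unfolding L0_eq K0_eq by simp_all
    with a b show ?rhs
      by blast
  next
    assume ?rhs
    then obtain a i l b j k where a: "a \<in> PiE I (\<lambda>i. S i - Hs i)" "i \<in> I" "l \<in> Ls i"
        "\<not> l \<subseteq> Hs i"
      and b: "b \<in> PiE I (\<lambda>i. S i - Hs i)" "j \<in> I" "k \<in> Ls j" "\<not> k \<subseteq> Hs j"
      and L: "L = segre_line a i (l - Hs i)" and K: "K = segre_line b j (k - Hs j)"
      and meet: "a(i := inf_pt (Hs i) l) = b(j := inf_pt (Hs j) k)"
      by blast
    show ?lhs
      unfolding compl_par_def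
    proof (intro exI conjI)
      show "segre_line a i l \<in> segre_lines I S Ls" "segre_line b j k \<in> segre_lines I S Ls"
        and "\<not> segre_line a i l \<subseteq> segre_hyp I S Hs" "\<not> segre_line b j k \<subseteq> segre_hyp I S Hs"
        using segre_line_off_hypI[OF pls a] segre_line_off_hypI[OF pls b] by blast+
      show "L = segre_line a i l - segre_hyp I S Hs" "K = segre_line b j k - segre_hyp I S Hs"
        using line[OF a] line[OF b] L K by simp_all
      show "inf_pt (segre_hyp I S Hs) (segre_line a i l)
          = inf_pt (segre_hyp I S Hs) (segre_line b j k)"
        using line[OF a] line[OF b] meet by simp
    qed
  qed
qed

lemma segre_par_of_compl_par:
  assumes pls: "\<forall>i\<in>I. partial_linear_space (S i) (Ls i)"
    and hyp: "\<forall>i\<in>I. hyperplane (S i) (Ls i) (Hs i)"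
    and par: "compl_par (segre_lines I S Ls) (segre_hyp I S Hs) L K"
  shows "segre_par I (\<lambda>i. S i - Hs i) (\<lambda>i. compl_lines (Ls i) (Hs i))
           (\<lambda>i. compl_par (Ls i) (Hs i)) L K"
proof -
  obtain a i l b j k where a: "a \<in> PiE I (\<lambda>i. S i - Hs i)" and i: "i \<in> I"
    and l: "l \<in> Ls i" "\<not> l \<subseteq> Hs i"
    and b: "b \<in> PiE I (\<lambda>i. S i - Hs i)" and j: "j \<in> I"
    and k: "k \<in> Ls j" "\<not> k \<subseteq> Hs j"
    and L: "L = segre_line a i (l - Hs i)" and K: "K = segre_line b j (k - Hs j)"
    and meet: "a(i := inf_pt (Hs i) l) = b(j := inf_pt (Hs j) k)"
    using compl_par_segre_iff[OF pls hyp, THEN iffD1, OF par] by blast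
  have p: "inf_pt (Hs i) l \<in> Hs i" and q: "inf_pt (Hs j) k \<in> Hs j"
    using hyp i j l k hyperplane_line_inter by blast+
  have ij: "i = j"
  proof (rule ccontr)
    assume "i \<noteq> j"
    then have "b i = inf_pt (Hs i) l" using fun_cong[OF meet, of i] by simp
    with p b i show False by (auto simp: PiE_iff)
  qed
  have pq: "inf_pt (Hs i) l = inf_pt (Hs i) k"
    using fun_cong[OF meet, of i] ij by simp
  have ab: "a s = b s" if "s \<noteq> i" for s
    using fun_cong[OF meet, of s] ij that by simp
  have "compl_par (Ls i) (Hs i) (l - Hs i) (k - Hs i)"
    unfolding compl_par_def using l k ij pq by blast
  then have "\<forall>s\<in>I. coord_set a i (l - Hs i) s = coord_set b j (k - Hs j) s
      \<or> (s = i \<and> s = j \<and> compl_par (Ls i) (Hs i) (l - Hs i) (k - Hs j))"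
    using ab ij by (auto simp: coord_set_def)
  moreover have "l - Hs i \<in> compl_lines (Ls i) (Hs i)" "k - Hs j \<in> compl_lines (Ls j) (Hs j)"
    using l k unfolding compl_lines_def by blast+
  ultimately show ?thesis
    unfolding segre_par_def using a b i j L K by blast
qed

lemma compl_par_of_segre_par:
  assumes pls: "\<forall>i\<in>I. partial_linear_space (S i) (Ls i)"
    and hyp: "\<forall>i\<in>I. hyperplane (S i) (Ls i) (Hs i)"
    and par: "segre_par I (\<lambda>i. S i - Hs i) (\<lambda>i. compl_lines (Ls i) (Hs i))
                (\<lambda>i. compl_par (Ls i) (Hs i)) L K"
  shows "compl_par (segre_lines I S Ls) (segre_hyp I S Hs) L K"
proof -
  obtain a i l' b j k' where a: "a \<in> PiE I (\<lambda>i. S i - Hs i)" and i: "i \<in> I"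
    and l': "l' \<in> compl_lines (Ls i) (Hs i)"
    and b: "b \<in> PiE I (\<lambda>i. S i - Hs i)" and j: "j \<in> I"
    and L: "L = segre_line a i l'" and K: "K = segre_line b j k'"
    and coords: "\<forall>s\<in>I. coord_set a i l' s = coord_set b j k' s
                   \<or> (s = i \<and> s = j \<and> compl_par (Ls i) (Hs i) l' k')"
    using par unfolding segre_par_def by blast
  have ab: "a s = b s" if "s \<noteq> i" "s \<noteq> j" for s
    using coords that a b by (cases "s \<in> I") (auto simp: coord_set_def PiE_iff extensional_def)
  show ?thesis
  proof (cases "i = j")
    case True
    then have "l' = k' \<or> compl_par (Ls i) (Hs i) l' k'"
      using coords i by (auto simp: coord_set_def)
    then have "compl_par (Ls i) (Hs i) l' k'"
      using l' unfolding compl_lines_def compl_par_def by blast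
    then obtain l k where lk: "l \<in> Ls i" "\<not> l \<subseteq> Hs i" "k \<in> Ls i" "\<not> k \<subseteq> Hs i"
      and "l' = l - Hs i" "k' = k - Hs i" and pq: "inf_pt (Hs i) l = inf_pt (Hs i) k"
      unfolding compl_par_def by blast
    with L K True have LK: "L = segre_line a i (l - Hs i)" "K = segre_line b i (k - Hs i)"
      by simp_all
    have "a(i := inf_pt (Hs i) l) = b(i := inf_pt (Hs i) k)"
      using ab True pq by (auto simp: fun_eq_iff)
    with a b i lk LK show ?thesis
      by (intro compl_par_segre_iff[OF pls hyp, THEN iffD2]) blast
  next
    case False
    \<comment> \<open>Possible only if \<open>l'\<close> and \<open>k'\<close> are single points (a two-point line minus its point at
       infinity); then \<open>L = K\<close>.\<close>
    have "l' = {b i}" "k' = {a j}"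
      using coords i j False by (force simp: coord_set_def)+
    moreover have "a(i := b i) = b(j := a j)"
      using ab False by (auto simp: fun_eq_iff)
    ultimately have "L = K"
      using L K by (simp add: segre_line_singleton)
    obtain l where l: "l \<in> Ls i" "\<not> l \<subseteq> Hs i" and "l' = l - Hs i"
      using l' unfolding compl_lines_def by blast
    with L \<open>L = K\<close> have "L = segre_line a i (l - Hs i)" "K = segre_line a i (l - Hs i)"
      by simp_all
    with a i l show ?thesis
      by (intro compl_par_segre_iff[OF pls hyp, THEN iffD2]) blast
  qed
qed

theorem proposition3p9:
  fixes I :: "'i set" and S :: "'i \<Rightarrow> 'p set" and Ls :: "'i \<Rightarrow> 'p set set"
    and Hs :: "'i \<Rightarrow> 'p set"
  assumes "countable I"
    and "\<exists>i\<in>I. \<exists>j\<in>I. i \<noteq> j"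
    and "\<forall>i\<in>I. partial_linear_space (S i) (Ls i)"
    and "\<forall>i\<in>I. hyperplane (S i) (Ls i) (Hs i)"
  shows "segre_points I S - segre_hyp I S Hs = segre_points I (\<lambda>i. S i - Hs i)
       \<and> compl_lines (segre_lines I S Ls) (segre_hyp I S Hs)
           = segre_lines I (\<lambda>i. S i - Hs i) (\<lambda>i. compl_lines (Ls i) (Hs i))
       \<and> (\<forall>L\<in>segre_lines I (\<lambda>i. S i - Hs i) (\<lambda>i. compl_lines (Ls i) (Hs i)).
          \<forall>K\<in>segre_lines I (\<lambda>i. S i - Hs i) (\<lambda>i. compl_lines (Ls i) (Hs i)).
            compl_par (segre_lines I S Ls) (segre_hyp I S Hs) L K
            \<longleftrightarrow> segre_par I (\<lambda>i. S i - Hs i) (\<lambda>i. compl_lines (Ls i) (Hs i))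
                   (\<lambda>i. compl_par (Ls i) (Hs i)) L K)"
  using segre_points_diff_hyp compl_lines_segre[OF assms(3)]
    segre_par_of_compl_par[OF assms(3,4)] compl_par_of_segre_par[OF assms(3,4)]
  by blast

end
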